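(* Let $k=3$ and $\alpha=(\tfrac13,\tfrac25,\tfrac27)$. Then every $\alpha$-communal triple can be written as the sum of one of $[0,0,0],[6,7,5],[8,10,7],[9,11,8]$ and a nonnegative integer linear combination of $[5,6,4],[7,8,6],[11,14,10]$. The number $f(g)$ of $\alpha$-communal triples with entries summing to $g$ has generating function \[ \sum_{g\ge0}f(g)x^g=\frac{1+x^{18}+x^{25}+x^{28}}{(1-x^{15})(1-x^{21})(1-x^{35})}. \] In particular $f(100)=3$, the triples being $[32,40,28]$, $[33,39,28]$, $[33,40,27]$, and $f(101)=1$, the unique triple being $[33,40,28]$.
   Context: A triple $[g_1,g_2,g_3]$ of integers is $\alpha$-communal if $0\le g_i\le\alpha_i(g_1+g_2+g_3)$ for $i=1,2,3$. *)

theory Defs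
  imports "HOL-Computational_Algebra.Formal_Power_Series"
begin

type_synonym triple = "int \<times> int \<times> int"

definition communal :: "rat \<times> rat \<times> rat \<Rightarrow> triple \<Rightarrow> bool" where
  "communal \<alpha> g \<longleftrightarrow>
     (case \<alpha> of (a1, a2, a3) \<Rightarrow> case g of (g1, g2, g3) \<Rightarrow>
        0 \<le> g1 \<and> of_int g1 \<le> a1 * of_int (g1 + g2 + g3) \<and>
        0 \<le> g2 \<and> of_int g2 \<le> a2 * of_int (g1 + g2 + g3) \<and>
        0 \<le> g3 \<and> of_int g3 \<le> a3 * of_int (g1 + g2 + g3))"

definition tsum :: "triple \<Rightarrow> int" where
  "tsum g = (case g of (g1, g2, g3) \<Rightarrow> g1 + g2 + g3)"

definition tadd :: "triple \<Rightarrow> triple \<Rightarrow> triple" where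
  "tadd a b = (case a of (a1, a2, a3) \<Rightarrow> case b of (b1, b2, b3) \<Rightarrow> (a1 + b1, a2 + b2, a3 + b3))"

definition tscale :: "nat \<Rightarrow> triple \<Rightarrow> triple" where
  "tscale n a = (case a of (a1, a2, a3) \<Rightarrow> (int n * a1, int n * a2, int n * a3))"

definition communal_set :: "rat \<times> rat \<times> rat \<Rightarrow> nat \<Rightarrow> triple set" where
  "communal_set \<alpha> g = {t. communal \<alpha> t \<and> tsum t = int g}"

definition fcount :: "rat \<times> rat \<times> rat \<Rightarrow> nat \<Rightarrow> nat" where
  "fcount \<alpha> g = card (communal_set \<alpha> g)"

end

theory Submission
  imports Defs "HOL-Library.Product_Plus"
begin

(*
  For alpha = (1/3, 2/5, 2/7) and a triple t = (a,b,c) with S = a+b+c, the three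
  "slacks" x = S - 3a, y = 2S - 5b, z = 2S - 7c are linear in t, and t is alpha-communal iff all
  three are nonnegative.  The generators (5,6,4), (7,8,6), (11,14,10) have slack vectors
  (0,0,2), (0,2,0), (2,0,0), so adding a generator raises exactly one slack by 2, and a communal
  triple whose slack is at least 2 in some coordinate is the corresponding generator plus another
  communal triple.  Call a communal triple reduced if all its slacks are 0 or 1; inverting the
  slack map shows that the reduced triples are exactly (0,0,0), (6,7,5), (8,10,7), (9,11,8).

  Peeling off generators by induction on the entry sum gives the decomposition.  Peeling off one
  generator of sum d from the set of communal triples of sum g satisfying some constraint Q gives a
  counting recurrence, i.e. multiplying the generating function by 1 - x^d; doing this for
  d = 15, 21, 35 leaves the generating function of the reduced triples, 1 + x^18 + x^25 + x^28.
  The values f(100) and f(101) follow by direct enumeration from the upper bounds on a, b, c.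
*)

section \<open>Slacks and communal triples\<close>

definition slack1 :: "triple \<Rightarrow> int" where
  "slack1 t = (case t of (a, b, c) \<Rightarrow> (a + b + c) - 3 * a)"

definition slack2 :: "triple \<Rightarrow> int" where
  "slack2 t = (case t of (a, b, c) \<Rightarrow> 2 * (a + b + c) - 5 * b)"

definition slack3 :: "triple \<Rightarrow> int" where
  "slack3 t = (case t of (a, b, c) \<Rightarrow> 2 * (a + b + c) - 7 * c)"

text \<open>Integer form of (1/3, 2/5, 2/7)-communality: all three slacks are nonnegative.\<close>
definition is_communal :: "triple \<Rightarrow> bool" where
  "is_communal t \<longleftrightarrow> 0 \<le> slack1 t \<and> 0 \<le> slack2 t \<and> 0 \<le> slack3 t"

text \<open>Nonnegative slacks force nonnegative entries: 35 x + 21 y + 15 z = 2 S gives S \<ge> 0, and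
  then each entry is at least 11 S / 35.\<close>
lemma is_communal_nonneg:
  assumes "is_communal (a, b, c)"
  shows "0 \<le> a \<and> 0 \<le> b \<and> 0 \<le> c"
  using assms unfolding is_communal_def slack1_def slack2_def slack3_def by simp

lemma communal_iff_is_communal: "communal (1/3, 2/5, 2/7) t \<longleftrightarrow> is_communal t"
proof -
  obtain a b c where t: "t = (a, b, c)" by (cases t)
  have bound: "(of_int x \<le> (of_int p / of_int q :: rat) * of_int y) \<longleftrightarrow> q * x \<le> p * y"
    if "0 < q" for x y p q :: int
  proof -
    have "(of_int x \<le> (of_int p / of_int q :: rat) * of_int y) \<longleftrightarrow> of_int (q * x) \<le> (of_int (p * y) :: rat)"
      using that by (simp add: field_simps)
    then show ?thesis by (simp only: of_int_le_iff)
  qed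
  have "communal (1/3, 2/5, 2/7) t \<longleftrightarrow> 0 \<le> a \<and> 0 \<le> b \<and> 0 \<le> c \<and> is_communal t"
    using bound[of 3 _ 1, simplified] bound[of 5 _ 2, simplified] bound[of 7 _ 2, simplified]
    by (auto simp: t communal_def is_communal_def slack1_def slack2_def slack3_def)
  then show ?thesis using is_communal_nonneg t by blast
qed

lemma entries_from_slacks:
  "t = (a, b, c) \<Longrightarrow> 2 * a = 11 * slack1 t + 7 * slack2 t + 5 * slack3 t"
  "t = (a, b, c) \<Longrightarrow> b = 7 * slack1 t + 4 * slack2 t + 3 * slack3 t"
  "t = (a, b, c) \<Longrightarrow> c = 5 * slack1 t + 3 * slack2 t + 2 * slack3 t"
  by (simp_all add: slack1_def slack2_def slack3_def algebra_simps)

lemma tadd_eq_plus: "tadd s t = s + t"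
  by (simp add: tadd_def split: prod.splits)

lemma tscale_0: "tscale 0 v = 0"
  by (simp add: tscale_def zero_prod_def split: prod.splits)

lemma tscale_Suc: "tscale (Suc n) v = tscale n v + v"
  by (simp add: tscale_def algebra_simps split: prod.splits)

lemma tsum_plus: "tsum (s + t) = tsum s + tsum t"
  by (simp add: tsum_def split: prod.splits)

lemma slacks_plus:
  "slack1 (s + t) = slack1 s + slack1 t"
  "slack2 (s + t) = slack2 s + slack2 t"
  "slack3 (s + t) = slack3 s + slack3 t"
  by (simp_all add: slack1_def slack2_def slack3_def split: prod.splits)

lemma slacks_minus:
  "slack1 (s - t) = slack1 s - slack1 t"
  "slack2 (s - t) = slack2 s - slack2 t"
  "slack3 (s - t) = slack3 s - slack3 t"
  by (simp_all add: slack1_def slack2_def slack3_def split: prod.splits)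

lemma split_off:
  assumes "is_communal t" "slack1 v \<le> slack1 t" "slack2 v \<le> slack2 t" "slack3 v \<le> slack3 t"
  shows "\<exists>u. t = u + v \<and> is_communal u"
  by (rule exI[of _ "t - v"]) (use assms in \<open>auto simp: is_communal_def slacks_minus\<close>)

section \<open>Generators and reduced triples\<close>

definition gen1 :: triple where "gen1 = (5, 6, 4)"
definition gen2 :: triple where "gen2 = (7, 8, 6)"
definition gen3 :: triple where "gen3 = (11, 14, 10)"

lemma generator_slacks:
  "slack1 gen1 = 0" "slack2 gen1 = 0" "slack3 gen1 = 2"
  "slack1 gen2 = 0" "slack2 gen2 = 2" "slack3 gen2 = 0"
  "slack1 gen3 = 2" "slack2 gen3 = 0" "slack3 gen3 = 0"
  by (simp_all add: gen1_def gen2_def gen3_def slack1_def slack2_def slack3_def)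

lemma generator_sums: "tsum gen1 = 15" "tsum gen2 = 21" "tsum gen3 = 35"
  by (simp_all add: gen1_def gen2_def gen3_def tsum_def)

lemma plus_generator:
  assumes "is_communal u"
  shows "is_communal (u + gen1) \<and> \<not> slack3 (u + gen1) \<le> 1"
    and "is_communal (u + gen2) \<and> \<not> slack2 (u + gen2) \<le> 1"
    and "is_communal (u + gen3) \<and> \<not> slack1 (u + gen3) \<le> 1"
  using assms by (simp_all add: is_communal_def slacks_plus generator_slacks)

lemma split_generator:
  assumes "is_communal t"
  shows "\<not> slack3 t \<le> 1 \<Longrightarrow> \<exists>u. t = u + gen1 \<and> is_communal u"
    and "\<not> slack2 t \<le> 1 \<Longrightarrow> \<exists>u. t = u + gen2 \<and> is_communal u"
    and "\<not> slack1 t \<le> 1 \<Longrightarrow> \<exists>u. t = u + gen3 \<and> is_communal u"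
  using assms split_off[of t gen1] split_off[of t gen2] split_off[of t gen3]
  by (auto simp: is_communal_def generator_slacks)

text \<open>Reduced triples: no generator can be split off.\<close>
definition reduced :: "triple \<Rightarrow> bool" where
  "reduced t \<longleftrightarrow> slack1 t \<le> 1 \<and> slack2 t \<le> 1 \<and> slack3 t \<le> 1"

definition bases :: "triple set" where
  "bases = {(0, 0, 0), (6, 7, 5), (8, 10, 7), (9, 11, 8)}"

text \<open>The reduced communal triples are exactly the four base triples.  Their slack vectors are
  0/1-vectors, and the inverse slack map leaves only the four of even weight 11x + 7y + 5z.\<close>
lemma reduced_communal_iff_base: "is_communal t \<and> reduced t \<longleftrightarrow> t \<in> bases"
proof
  assume red: "is_communal t \<and> reduced t"
  obtain a b c where t: "t = (a, b, c)" by (cases t)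
  have "slack1 t = 0 \<or> slack1 t = 1" "slack2 t = 0 \<or> slack2 t = 1" "slack3 t = 0 \<or> slack3 t = 1"
    using red by (auto simp: is_communal_def reduced_def)
  then show "t \<in> bases"
    using entries_from_slacks[OF t] unfolding t bases_def
    by (elim disjE) (simp_all; presburger)+
next
  assume "t \<in> bases"
  then show "is_communal t \<and> reduced t"
    by (auto simp: bases_def is_communal_def reduced_def slack1_def slack2_def slack3_def)
qed

definition decomposable :: "triple \<Rightarrow> bool" where
  "decomposable t \<longleftrightarrow> (\<exists>b\<in>bases. \<exists>n1 n2 n3 :: nat.
     t = tadd b (tadd (tscale n1 gen1) (tadd (tscale n2 gen2) (tscale n3 gen3))))"

lemma decomposable_base: "b \<in> bases \<Longrightarrow> decomposable b"
  unfolding decomposable_def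
  by (rule bexI[of _ b], rule exI[of _ 0], rule exI[of _ 0], rule exI[of _ 0])
     (simp_all add: tadd_eq_plus tscale_0)

lemma decomposable_plus_generator:
  assumes "decomposable u"
  shows "decomposable (u + gen1)" "decomposable (u + gen2)" "decomposable (u + gen3)"
proof -
  obtain b n1 n2 n3 where b: "b \<in> bases"
    and u: "u = b + (tscale n1 gen1 + (tscale n2 gen2 + tscale n3 gen3))"
    using assms by (auto simp: decomposable_def tadd_eq_plus)
  have "u + gen1 = b + (tscale (Suc n1) gen1 + (tscale n2 gen2 + tscale n3 gen3))"
       "u + gen2 = b + (tscale n1 gen1 + (tscale (Suc n2) gen2 + tscale n3 gen3))"
       "u + gen3 = b + (tscale n1 gen1 + (tscale n2 gen2 + tscale (Suc n3) gen3))"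
    by (simp_all add: u tscale_Suc ac_simps)
  with b show "decomposable (u + gen1)" "decomposable (u + gen2)" "decomposable (u + gen3)"
    by (auto simp: decomposable_def tadd_eq_plus)
qed

lemma communal_decomposable: "is_communal t \<Longrightarrow> decomposable t"
proof (induction "nat (tsum t)" arbitrary: t rule: less_induct)
  case less
  have smaller: "nat (tsum u) < nat (tsum t)" if "t = u + v" "is_communal u" "0 < tsum v" for u v
  proof -
    obtain a b c where "u = (a, b, c)" by (cases u)
    then have "0 \<le> tsum u" using is_communal_nonneg \<open>is_communal u\<close> by (simp add: tsum_def)
    then show ?thesis using that by (simp add: tsum_plus)
  qed
  show ?case
  proof (cases "reduced t")
    case True
    then show ?thesis using less.prems decomposable_base reduced_communal_iff_base by blast
  next
    case False
    then consider "\<not> slack3 t \<le> 1" | "\<not> slack2 t \<le> 1" | "\<not> slack1 t \<le> 1"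
      by (auto simp: reduced_def)
    then show ?thesis
      using split_generator[OF less.prems] smaller less.hyps decomposable_plus_generator
        generator_sums
      by cases (metis zero_less_numeral)+
  qed
qed

section \<open>Counting by peeling off generators\<close>

definition region :: "(triple \<Rightarrow> bool) \<Rightarrow> int \<Rightarrow> triple set" where
  "region Q g = {t. is_communal t \<and> tsum t = g \<and> Q t}"

definition num_region :: "(triple \<Rightarrow> bool) \<Rightarrow> int \<Rightarrow> nat" where
  "num_region Q g = card (region Q g)"

lemma region_subset_box: "region Q g \<subseteq> {0..g} \<times> {0..g} \<times> {0..g}"
proof
  fix t assume "t \<in> region Q g"
  moreover obtain a b c where "t = (a, b, c)" by (cases t)
  ultimately show "t \<in> {0..g} \<times> {0..g} \<times> {0..g}"
    using is_communal_nonneg[of a b c] by (auto simp: region_def tsum_def)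
qed

lemma finite_region: "finite (region Q g)"
  using region_subset_box by (rule finite_subset) auto

lemma num_region_negative: "g < 0 \<Longrightarrow> num_region Q g = 0"
  using region_subset_box[of Q g] by (auto simp: num_region_def)

lemma num_region_peel:
  assumes sum: "tsum v = d"
    and Q_inv: "\<And>t. Q (t + v) \<longleftrightarrow> Q t"
    and into: "\<And>u. is_communal u \<Longrightarrow> is_communal (u + v) \<and> \<not> P (u + v)"
    and onto: "\<And>t. is_communal t \<Longrightarrow> \<not> P t \<Longrightarrow> \<exists>u. t = u + v \<and> is_communal u"
  shows "num_region Q g = num_region (\<lambda>t. Q t \<and> P t) g + num_region Q (g - d)"
proof -
  have shifted: "{t \<in> region Q g. \<not> P t} = (\<lambda>u. u + v) ` region Q (g - d)"
  proof (intro set_eqI iffI)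
    fix t assume t: "t \<in> {t \<in> region Q g. \<not> P t}"
    then obtain u where "t = u + v" "is_communal u"
      using onto unfolding region_def by blast
    with t show "t \<in> (\<lambda>u. u + v) ` region Q (g - d)"
      using sum Q_inv by (auto simp: region_def tsum_plus)
  qed (use sum Q_inv into in \<open>auto simp: region_def tsum_plus\<close>)
  have parts: "region Q g = region (\<lambda>t. Q t \<and> P t) g \<union> {t \<in> region Q g. \<not> P t}"
    and disjoint: "region (\<lambda>t. Q t \<and> P t) g \<inter> {t \<in> region Q g. \<not> P t} = {}"
    by (auto simp: region_def)
  have "finite (region (\<lambda>t. Q t \<and> P t) g)" "finite {t \<in> region Q g. \<not> P t}"
    using finite_region by auto
  from card_Un_disjoint[OF this disjoint]
  have "num_region Q g = num_region (\<lambda>t. Q t \<and> P t) g + card {t \<in> region Q g. \<not> P t}"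
    unfolding num_region_def parts[symmetric] .
  also have "card {t \<in> region Q g. \<not> P t} = num_region Q (g - d)"
    unfolding shifted num_region_def by (simp add: card_image)
  finally show ?thesis .
qed

lemma fps_of_recurrence:
  fixes a b :: "int \<Rightarrow> nat" and d :: nat
  assumes rec: "\<And>g. a g = b g + a (g - int d)" and neg: "\<And>g. g < 0 \<Longrightarrow> a g = 0"
  shows "Abs_fps (\<lambda>n. of_nat (a (int n))) * (1 - fps_X ^ d)
         = (Abs_fps (\<lambda>n. of_nat (b (int n))) :: 'r :: comm_ring_1 fps)"
proof (rule fps_ext)
  fix n
  have coeff: "of_nat (a (int n)) - (if n < d then 0 else of_nat (a (int n - int d)))
               = (of_nat (b (int n)) :: 'r)"
    using rec[of "int n"] neg[of "int n - int d"] by (cases "n < d") simp_all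
  have "Abs_fps (\<lambda>n. of_nat (a (int n))) * (1 - fps_X ^ d)
        = Abs_fps (\<lambda>n. of_nat (a (int n))) - fps_X ^ d * (Abs_fps (\<lambda>n. of_nat (a (int n))) :: 'r fps)"
    by (simp add: algebra_simps)
  then show "fps_nth (Abs_fps (\<lambda>n. of_nat (a (int n))) * (1 - fps_X ^ d)) n
             = fps_nth (Abs_fps (\<lambda>n. of_nat (b (int n))) :: 'r fps) n"
    using coeff by (cases "n < d") (simp_all add: fps_X_power_mult_nth)
qed

definition region_gf :: "(triple \<Rightarrow> bool) \<Rightarrow> rat fps" where
  "region_gf Q = Abs_fps (\<lambda>n. of_nat (num_region Q (int n)))"

lemma region_gf_peel:
  assumes "tsum v = int d" "\<And>t. Q (t + v) \<longleftrightarrow> Q t"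
    "\<And>u. is_communal u \<Longrightarrow> is_communal (u + v) \<and> \<not> P (u + v)"
    "\<And>t. is_communal t \<Longrightarrow> \<not> P t \<Longrightarrow> \<exists>u. t = u + v \<and> is_communal u"
  shows "region_gf Q * (1 - fps_X ^ d) = region_gf (\<lambda>t. Q t \<and> P t)"
  unfolding region_gf_def
  using fps_of_recurrence[of "num_region Q" "num_region (\<lambda>t. Q t \<and> P t)" d]
    num_region_peel[of v "int d" Q P, OF assms] num_region_negative
  by blast

lemma region_gf_product:
  "region_gf (\<lambda>_. True) * ((1 - fps_X ^ 15) * (1 - fps_X ^ 21) * (1 - fps_X ^ 35))
   = region_gf reduced"
proof -
  have peel1: "region_gf (\<lambda>_. True) * (1 - fps_X ^ 15) = region_gf (\<lambda>t. True \<and> slack3 t \<le> 1)"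
    by (rule region_gf_peel[of gen1], simp add: generator_sums, simp add: slacks_plus generator_slacks,
        use plus_generator(1) in blast, use split_generator(1) in blast)
  have peel2: "region_gf (\<lambda>t. True \<and> slack3 t \<le> 1) * (1 - fps_X ^ 21)
               = region_gf (\<lambda>t. (True \<and> slack3 t \<le> 1) \<and> slack2 t \<le> 1)"
    by (rule region_gf_peel[of gen2], simp add: generator_sums, simp add: slacks_plus generator_slacks,
        use plus_generator(2) in blast, use split_generator(2) in blast)
  have peel3: "region_gf (\<lambda>t. (True \<and> slack3 t \<le> 1) \<and> slack2 t \<le> 1) * (1 - fps_X ^ 35)
               = region_gf (\<lambda>t. ((True \<and> slack3 t \<le> 1) \<and> slack2 t \<le> 1) \<and> slack1 t \<le> 1)"
    by (rule region_gf_peel[of gen3], simp add: generator_sums, simp add: slacks_plus generator_slacks,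
        use plus_generator(3) in blast, use split_generator(3) in blast)
  have "(\<lambda>t. ((True \<and> slack3 t \<le> 1) \<and> slack2 t \<le> 1) \<and> slack1 t \<le> 1) = reduced"
    by (auto simp: reduced_def)
  with peel1 peel2 peel3 show ?thesis
    by (simp only: mult.assoc[symmetric])
qed

text \<open>The generating function of the reduced triples records the sums 0, 18, 25, 28 of the bases.\<close>
lemma region_gf_reduced: "region_gf reduced = 1 + fps_X ^ 18 + fps_X ^ 25 + fps_X ^ 28"
proof (rule fps_ext)
  fix n
  have "region reduced (int n) = {b \<in> bases. tsum b = int n}"
    using reduced_communal_iff_base by (auto simp: region_def)
  also have "\<dots> = (if n = 0 then {(0, 0, 0)} else if n = 18 then {(6, 7, 5)}
                   else if n = 25 then {(8, 10, 7)} else if n = 28 then {(9, 11, 8)} else {})"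
    by (auto simp: bases_def tsum_def)
  finally show "fps_nth (region_gf reduced) n = fps_nth (1 + fps_X ^ 18 + fps_X ^ 25 + fps_X ^ 28) n"
    by (simp add: region_gf_def num_region_def)
qed

section \<open>The cases g = 100 and g = 101\<close>

text \<open>Upper bounds on the entries of a communal triple of sum g; for g = 100, 101 they leave
  only a handful of candidates.\<close>
lemma region_bounds:
  assumes "(a, b, c) \<in> region Q g"
  shows "3 * a \<le> g" "5 * b \<le> 2 * g" "7 * c \<le> 2 * g" "a + b + c = g"
  using assms by (auto simp: region_def is_communal_def slack1_def slack2_def slack3_def tsum_def)

lemma region_100: "region (\<lambda>_. True) 100 = {(32, 40, 28), (33, 39, 28), (33, 40, 27)}"
proof (intro set_eqI iffI)
  fix t assume "t \<in> region (\<lambda>_. True) 100"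
  moreover obtain a b c where t: "t = (a, b, c)" by (cases t)
  ultimately have "(a, b, c) \<in> region (\<lambda>_. True) 100" by simp
  from region_bounds[OF this] have "a \<le> 33" "b \<le> 40" "c \<le> 28" "a + b + c = 100"
    by linarith+
  then show "t \<in> {(32, 40, 28), (33, 39, 28), (33, 40, 27)}"
    unfolding t by (cases "a = 33"; cases "b = 40") simp_all
qed (auto simp: region_def is_communal_def slack1_def slack2_def slack3_def tsum_def)

lemma region_101: "region (\<lambda>_. True) 101 = {(33, 40, 28)}"
proof (intro set_eqI iffI)
  fix t assume "t \<in> region (\<lambda>_. True) 101"
  moreover obtain a b c where t: "t = (a, b, c)" by (cases t)
  ultimately have "(a, b, c) \<in> region (\<lambda>_. True) 101" by simp
  from region_bounds[OF this] have "a \<le> 33" "b \<le> 40" "c \<le> 28" "a + b + c = 101"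
    by linarith+
  then show "t \<in> {(33, 40, 28)}" unfolding t by simp
qed (auto simp: region_def is_communal_def slack1_def slack2_def slack3_def tsum_def)

theorem mainTheorem12:
  fixes \<alpha> :: "rat \<times> rat \<times> rat"
  assumes "\<alpha> = (1/3, 2/5, 2/7)"
  shows "(\<forall>t. communal \<alpha> t \<longrightarrow>
            (\<exists>b\<in>{(0,0,0), (6,7,5), (8,10,7), (9,11,8)}. \<exists>n1 n2 n3 :: nat.
               t = tadd b (tadd (tscale n1 (5,6,4)) (tadd (tscale n2 (7,8,6)) (tscale n3 (11,14,10))))))
       \<and> Abs_fps (\<lambda>g. of_nat (fcount \<alpha> g) :: rat)
           = (1 + fps_X ^ 18 + fps_X ^ 25 + fps_X ^ 28)
             / ((1 - fps_X ^ 15) * (1 - fps_X ^ 21) * (1 - fps_X ^ 35))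
       \<and> fcount \<alpha> 100 = 3
       \<and> communal_set \<alpha> 100 = {(32,40,28), (33,39,28), (33,40,27)}
       \<and> fcount \<alpha> 101 = 1
       \<and> communal_set \<alpha> 101 = {(33,40,28)}"
proof -
  have sets: "communal_set \<alpha> g = region (\<lambda>_. True) (int g)" for g
    by (simp add: communal_set_def region_def assms communal_iff_is_communal)
  have decomposition: "\<forall>t. communal \<alpha> t \<longrightarrow>
            (\<exists>b\<in>{(0,0,0), (6,7,5), (8,10,7), (9,11,8)}. \<exists>n1 n2 n3 :: nat.
               t = tadd b (tadd (tscale n1 (5,6,4)) (tadd (tscale n2 (7,8,6)) (tscale n3 (11,14,10)))))"
    using communal_decomposable
    by (simp add: assms communal_iff_is_communal decomposable_def bases_def gen1_def gen2_def gen3_def)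
  define D :: "rat fps" where "D = (1 - fps_X ^ 15) * (1 - fps_X ^ 21) * (1 - fps_X ^ 35)"
  have "fps_nth D 0 \<noteq> 0" by (simp add: D_def)
  then have "(1 + fps_X ^ 18 + fps_X ^ 25 + fps_X ^ 28) / D = region_gf (\<lambda>_. True)"
    using region_gf_product region_gf_reduced unfolding D_def[symmetric]
    by (metis fps_divide_unit mult.assoc mult.right_neutral inverse_mult_eq_1')
  moreover have "Abs_fps (\<lambda>g. of_nat (fcount \<alpha> g)) = region_gf (\<lambda>_. True)"
    by (simp add: fcount_def region_gf_def num_region_def sets)
  ultimately show ?thesis
    using decomposition region_100 region_101 by (simp add: D_def fcount_def sets)
qed

end
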